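(* For all $n,k\ge 0$, with $C_j=\frac{1}{j+1}\binom{2j}{j}$ the Catalan numbers, $$\frac{1}{n+1}\binom{2n+2}{n-k}\binom{n+k}{k}=\sum_{j=0}^{n}\binom{j}{k}\binom{n+k}{2j}2^{\,n+k-2j}C_j .$$ Equivalently, the Borel polynomials $B_n(y)=\sum_{k=0}^nB_{n,k}y^k$ are the image of the Catalan sequence under the (bivariate) Riordan array $\left(\frac{1}{1-2x},\frac{x(x+y)}{(1-2x)^2}\right)$.
   Context: A Riordan array $(g(x),f(x))$ with $g(0)\neq0$, $f(0)=0$, $f'(0)\ne0$ is the lower-triangular matrix with $(n,k)$ entry $[x^n]g(x)f(x)^k$; it acts on a sequence with generating function $h(x)$ to give the sequence with generating function $g(x)h(f(x))$. Binomial coefficients with lower index out of range are $0$. *)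

theory Defs
  imports Complex_Main
begin

definition catalan :: "nat \<Rightarrow> rat" where
  "catalan j = of_nat ((2*j) choose j) / of_nat (j + 1)"

end

theory Submission
  imports Defs "HOL-Computational_Algebra.Polynomial"
begin

text \<open>
  Writing \<open>(1 + x)\<^sup>2 = x\<^sup>2 + (1 + 2x)\<close> and expanding \<open>(1 + x)\<^sup>2\<^sup>M\<close> by the binomial theorem gives
  \<open>binom(2M, t) = \<Sum>\<^sub>a binom(M, a) binom(M - a, t - 2a) 2\<^sup>t\<^sup>-\<^sup>2\<^sup>a\<close>.
  With \<open>M = n + 1\<close> and \<open>t = n - k\<close>, the \<open>a\<close>-th term of this sum, multiplied by
  \<open>binom(n + k, k) / (n + 1)\<close>, is exactly the \<open>j\<close>-th term of the right-hand side for \<open>j = a + k\<close>,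
  as a comparison of factorials shows; all other terms of the right-hand side vanish.
\<close>

lemma coeff_linear_poly_power_eq:
  fixes a b :: "'a::comm_semiring_1"
  shows "coeff ([:a, b:] ^ n) i = of_nat (n choose i) * b ^ i * a ^ (n - i)"
proof (cases "i \<le> n")
  case True
  then show ?thesis by (rule coeff_linear_poly_power)
next
  case False
  have "degree ([:a, b:] ^ n) \<le> degree [:a, b:] * n"
    by (rule degree_power_le)
  also have "\<dots> \<le> n"
    by simp
  finally have "degree ([:a, b:] ^ n) \<le> n" .
  with False show ?thesis by (simp add: coeff_eq_0 binomial_eq_0)
qed

lemma binomial_double_eq_sum:
  "(2*M) choose t = (\<Sum>a \<le> t div 2. (M choose a) * ((M - a) choose (t - 2*a)) * 2 ^ (t - 2*a))"
proof -
  define h where "h a = (M choose a) * ((M - a) choose (t - 2*a)) * 2 ^ (t - 2*a)" for a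
  have square: "[:1, 1::nat:] ^ 2 = monom 1 2 + [:1, 2:]"
    by (simp add: power2_eq_square monom_altdef)
  have summand: "coeff (of_nat (M choose a) * monom 1 2 ^ a * [:1, 2:] ^ (M - a)) t
      = (if 2*a \<le> t then h a else 0)" for a
    by (simp add: h_def monom_power of_nat_monom mult_monom coeff_monom_mult coeff_linear_poly_power_eq)
  have "(2*M) choose t = coeff ([:1, 1:] ^ (2*M)) t"
    by (simp add: coeff_linear_poly_power_eq)
  also have "[:1, 1::nat:] ^ (2*M) = (monom 1 2 + [:1, 2:]) ^ M"
    by (simp only: power_mult square)
  also have "coeff \<dots> t = (\<Sum>a \<le> M. if 2*a \<le> t then h a else 0)"
    by (simp only: binomial_ring coeff_sum summand)
  also have "\<dots> = (\<Sum>a \<in> {a \<in> {..M}. 2*a \<le> t}. h a)"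
    by (rule sum.inter_filter[symmetric]) simp
  also have "\<dots> = (\<Sum>a \<le> t div 2. h a)"
    by (rule sum.mono_neutral_left) (auto simp: h_def)
  finally show ?thesis by (simp add: h_def)
qed

lemma sum_atLeast0_atMost_eq_shifted:
  fixes f :: "nat \<Rightarrow> 'a::comm_monoid_add"
  assumes below: "\<And>j. j < k \<Longrightarrow> f j = 0"
    and above: "\<And>j. 2*k + d < 2*j \<Longrightarrow> f j = 0"
  shows "(\<Sum>j = 0..k + d. f j) = (\<Sum>a \<le> d div 2. f (a + k))"
proof -
  have "(\<Sum>j = 0..k + d. f j) = (\<Sum>j \<in> (\<lambda>a. a + k) ` {..d div 2}. f j)"
  proof (rule sum.mono_neutral_right)
    show "\<forall>j \<in> {0..k + d} - (\<lambda>a. a + k) ` {..d div 2}. f j = 0"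
    proof
      fix j assume j: "j \<in> {0..k + d} - (\<lambda>a. a + k) ` {..d div 2}"
      have "j < k \<or> 2*k + d < 2*j"
      proof (rule ccontr)
        assume "\<not> (j < k \<or> 2*k + d < 2*j)"
        then have "j = (j - k) + k" and "j - k \<in> {..d div 2}"
          by auto
        with j show False
          by blast
      qed
      with below above show "f j = 0"
        by blast
    qed
  qed auto
  also have "\<dots> = (\<Sum>a \<le> d div 2. f (a + k))"
    by (simp add: sum.reindex)
  finally show ?thesis .
qed

lemma catalan_summand_eq:
  fixes k a r :: nat
  defines "n \<equiv> k + 2*a + r"
  shows "of_nat ((a + k) choose k) * of_nat ((n + k) choose (2*(a + k))) * 2 ^ (n + k - 2*(a + k)) * catalan (a + k)
       = of_nat ((n + k) choose k) / of_nat (n + 1) * of_nat (((n + 1) choose a) * ((n + 1 - a) choose r) * 2 ^ r)"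
proof -
  have binomials_as_factorials:
    "(of_nat ((n + k) choose k) :: rat) = fact (n + k) / (fact k * fact n)"
    "(of_nat ((n + 1) choose a) :: rat) = fact (n + 1) / (fact a * fact (r + (a + k + 1)))"
    "(of_nat ((n + 1 - a) choose r) :: rat) = fact (r + (a + k + 1)) / (fact r * fact (a + k + 1))"
    "(of_nat ((a + k) choose k) :: rat) = fact (a + k) / (fact k * fact a)"
    "(of_nat ((n + k) choose (2*(a + k))) :: rat) = fact (n + k) / (fact (2*(a + k)) * fact r)"
    "(of_nat ((2*(a + k)) choose (a + k)) :: rat) = fact (2*(a + k)) / (fact (a + k) * fact (a + k))"
    by (subst binomial_fact; simp add: n_def ac_simps mult_2)+
  have fact_n_plus_1: "fact (n + 1) = (of_nat (n + 1) :: rat) * fact n"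
    by simp
  have fact_a_k_plus_1: "fact (a + k + 1) = (of_nat (a + k + 1) :: rat) * fact (a + k)"
    by simp
  have exponent_eq: "n + k - 2*(a + k) = r"
    by (simp add: n_def)
  show ?thesis
    unfolding catalan_def exponent_eq of_nat_mult binomials_as_factorials fact_n_plus_1 fact_a_k_plus_1
    by (simp add: field_simps del: of_nat_add of_nat_Suc)
qed

theorem mainTheorem5:
  fixes n k :: nat
  shows "(1 / of_nat (n + 1)) * (if k \<le> n then of_nat ((2*n + 2) choose (n - k)) else 0)
           * of_nat ((n + k) choose k)
       = (\<Sum>j = 0..n. of_nat (j choose k) * of_nat ((n + k) choose (2*j))
                      * 2 ^ (n + k - 2*j) * catalan j :: rat)"
proof (cases "k \<le> n")
  case False
  then show ?thesis by (simp add: binomial_eq_0)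
next
  case True
  then obtain d where n: "n = k + d"
    using le_Suc_ex by blast
  define f where "f j = of_nat (j choose k) * of_nat ((n + k) choose (2*j)) * 2 ^ (n + k - 2*j) * catalan j" for j
  define g :: "nat \<Rightarrow> rat" where "g a = of_nat (((n + 1) choose a) * ((n + 1 - a) choose (d - 2*a)) * 2 ^ (d - 2*a))" for a
  have summand: "f (a + k) = of_nat ((n + k) choose k) / of_nat (n + 1) * g a" if "a \<le> d div 2" for a
  proof -
    have "2*a \<le> d"
      using that by presburger
    then obtain r where d: "d = 2*a + r"
      using le_Suc_ex by blast
    have "n = k + 2*a + r" and "d - 2*a = r"
      using n d by simp_all
    then show ?thesis
      unfolding f_def g_def by (simp only: catalan_summand_eq)
  qed
  have "(\<Sum>j = 0..n. f j) = (\<Sum>a \<le> d div 2. f (a + k))"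
    unfolding n by (rule sum_atLeast0_atMost_eq_shifted) (auto simp: f_def binomial_eq_0 n)
  also have "\<dots> = of_nat ((n + k) choose k) / of_nat (n + 1) * (\<Sum>a \<le> d div 2. g a)"
    by (simp add: summand sum_distrib_left)
  also have "(\<Sum>a \<le> d div 2. g a) = of_nat ((2*(n + 1)) choose d)"
    unfolding g_def binomial_double_eq_sum of_nat_sum ..
  finally show ?thesis
    using True by (simp add: f_def n)
qed

end
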